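(* Let $\kappa$ be a regular infinite cardinal. For each $i\in\{a,b\}$ (with $j$ the other player) there is a function $T_i:W^\kappa\to\Delta(W^\kappa,\mathrm{Pow}(W^\kappa))$ such that for all $w^\kappa\in W^\kappa$: (a) $T_i(u^\kappa)=T_i(w^\kappa)$ for all $u^\kappa\in P_i(w^\kappa)$; (b) $T_i(w^\kappa)(P_i(w^\kappa))=1$; (c) $T_i(w^\kappa)([X_0^\kappa=w_0])$ equals $1$ if $w_i^\kappa(0)=1$ and $\tfrac12$ if $w_i^\kappa(0)=0$; (d) for every $\beta<\kappa$, $T_i(w^\kappa)([X_j^\kappa(\beta)=w_j^\kappa(\beta)])$ equals $1$ if $w_i^\kappa(\beta+1)=1$ and $\tfrac12$ if $w_i^\kappa(\beta+1)=0$; (e) for every limit ordinal $\lambda<\kappa$, $T_i(w^\kappa)([\lambda\text{-par}(X_j^\kappa)=\lambda\text{-par}(w_j^\kappa)])$ equals $1$ if $w_i^\kappa(\lambda)=1$ and $\tfrac12$ if $w_i^\kappa(\lambda)=0$; (f) for all $0\le\beta<\alpha<\kappa$, all $u^\kappa,w^\kappa\in W^\kappa$ and all $E^\beta\subseteq W^\beta$: if $u^\kappa\upharpoonright\alpha=w^\kappa\upharpoonright\alpha$ then $T_i(u^\kappa)(\pi_{\beta,\kappa}^{-1}(E^\beta))=T_i(w^\kappa)(\pi_{\beta,\kappa}^{-1}(E^\beta))$.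
   Context: $\Delta(M,\mathrm{Pow}(M))$ is the set of finitely additive probability measures on all subsets of $M$. For an ordinal $\alpha\ge1$, a record of length $\alpha$ is a sequence $r=(r(\beta))_{\beta<\alpha}$ in $\{0,1\}$ such that for every limit ordinal $\lambda\le\alpha$ there is $\gamma<\lambda$ with $r(\beta)=0$ for all $\gamma\le\beta<\lambda$. Parity of ordinals: finite ordinals have the usual parity (0 is even); an infinite ordinal $\gamma=\hat\lambda+n$ ($\hat\lambda$ limit, $n$ finite) is even/odd as $n$ is. For a record $r$ of length $\alpha$ and limit $\lambda\le\alpha$, $o^\lambda(r)$ is the least ordinal $<\lambda$ with $r(\beta)=0$ for all $o^\lambda(r)\le\beta<\lambda$, and $\lambda\text{-par}(r)$ is the parity of $o^\lambda(r)$. $W^0=\{h,t\}$; for $\alpha\ge1$, $W^\alpha$ is the set of triples $w^\alpha=(w_0,w_a^\alpha,w_b^\alpha)$ with $w_0\in\{h,t\}$ and $w_a^\alpha,w_b^\alpha$ records of length $\alpha$. For $0<\beta\le\alpha$, $w^\alpha\upharpoonright\beta=(w_0,w_a^\alpha\upharpoonright\beta,w_b^\alpha\upharpoonright\beta)$ (restricting the sequences), and $w^\alpha\upharpoonright0=w_0$; $\pi_{\beta,\alpha}:W^\alpha\to W^\beta$, $w^\alpha\mapsto w^\alpha\upharpoonright\beta$. For $\alpha>0$, $i\in\{a,b\}$, $j$ the other player: $P_i(w^\alpha)$ is the set of $v^\alpha=(v_0,v_a^\alpha,v_b^\alpha)\in W^\alpha$ with $v_i^\alpha=w_i^\alpha$;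 $w_i^\alpha(0)=1\Rightarrow v_0=w_0$; for all $\beta$ with $\beta+1<\alpha$, $w_i^\alpha(\beta+1)=1\Rightarrow v_j^\alpha(\beta)=w_j^\alpha(\beta)$; for all limit $\lambda<\alpha$, $w_i^\alpha(\lambda)=1\Rightarrow\lambda\text{-par}(v_j^\alpha)=\lambda\text{-par}(w_j^\alpha)$. Notation: $[X_0^\kappa=w_0]=\{u\in W^\kappa:u_0=w_0\}$; $[X_j^\kappa(\beta)=c]=\{u\in W^\kappa:u_j^\kappa(\beta)=c\}$; $[\lambda\text{-par}(X_j^\kappa)=e]=\{u\in W^\kappa:\lambda\text{-par}(u_j^\kappa)=e\}$. *)

theory Defs
  imports Complex_Main
begin

(* Ordinals below kappa are the elements of a wellorder type 'k whose order type is kappa. *)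

datatype coin = H | T
datatype player = Pa | Pb

fun other :: "player \<Rightarrow> player" where
  "other Pa = Pb" | "other Pb = Pa"

definition ozero :: "'k::wellorder" where
  "ozero = (LEAST x. True)"

definition osucc :: "'k::wellorder \<Rightarrow> 'k" where
  "osucc x = (LEAST y. x < y)"

definition is_limit :: "'k::wellorder \<Rightarrow> bool" where
  "is_limit l \<longleftrightarrow> (\<exists>y. y < l) \<and> (\<forall>y<l. \<exists>z. y < z \<and> z < l)"

definition ord_even :: "'k::wellorder \<Rightarrow> bool" where
  "ord_even g \<longleftrightarrow> (\<exists>l n. (l = ozero \<or> is_limit l) \<and> g = (osucc ^^ n) l \<and> even n)"

definition zero_tail :: "'k::wellorder \<Rightarrow> ('k \<Rightarrow> bool) \<Rightarrow> 'k \<Rightarrow> bool" where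
  "zero_tail l r g \<longleftrightarrow> (\<forall>b. g \<le> b \<and> b < l \<longrightarrow> \<not> r b)"

definition is_record_len :: "'k::wellorder \<Rightarrow> ('k \<Rightarrow> bool) \<Rightarrow> bool" where
  "is_record_len a r \<longleftrightarrow> (\<forall>x. a \<le> x \<longrightarrow> \<not> r x) \<and>
     (\<forall>l. is_limit l \<and> l \<le> a \<longrightarrow> (\<exists>g<l. zero_tail l r g))"

(* record of length kappa: includes the limit kappa itself *)
definition is_record_kappa :: "('k::wellorder \<Rightarrow> bool) \<Rightarrow> bool" where
  "is_record_kappa r \<longleftrightarrow> (\<forall>l. is_limit l \<longrightarrow> (\<exists>g<l. zero_tail l r g)) \<and>
     (\<exists>g. \<forall>b. g \<le> b \<longrightarrow> \<not> r b)"

definition o_lim :: "'k::wellorder \<Rightarrow> ('k \<Rightarrow> bool) \<Rightarrow> 'k" where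
  "o_lim l r = (LEAST g. g < l \<and> zero_tail l r g)"

definition lim_par :: "'k::wellorder \<Rightarrow> ('k \<Rightarrow> bool) \<Rightarrow> bool" where
  "lim_par l r = ord_even (o_lim l r)"

type_synonym 'k world = "coin \<times> ('k \<Rightarrow> bool) \<times> ('k \<Rightarrow> bool)"

definition wrec :: "player \<Rightarrow> 'k world \<Rightarrow> ('k \<Rightarrow> bool)" where
  "wrec i w = (case i of Pa \<Rightarrow> fst (snd w) | Pb \<Rightarrow> snd (snd w))"

definition Wk :: "('k::wellorder) world set" where
  "Wk = {w. is_record_kappa (wrec Pa w) \<and> is_record_kappa (wrec Pb w)}"

(* W^beta for beta < kappa; for beta = ozero this encodes W^0 = {h,t} as (c, empty, empty) *)
definition W_at :: "'k::wellorder \<Rightarrow> 'k world set" where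
  "W_at b = {w. is_record_len b (wrec Pa w) \<and> is_record_len b (wrec Pb w)}"

definition restr :: "'k::wellorder \<Rightarrow> 'k world \<Rightarrow> 'k world" where
  "restr b w = (fst w, \<lambda>x. x < b \<and> wrec Pa w x, \<lambda>x. x < b \<and> wrec Pb w x)"

definition preim :: "'k::wellorder \<Rightarrow> 'k world set \<Rightarrow> 'k world set" where
  "preim b E = {u \<in> Wk. restr b u \<in> E}"

definition Pset :: "player \<Rightarrow> 'k::wellorder world \<Rightarrow> 'k world set" where
  "Pset i w = {v \<in> Wk. wrec i v = wrec i w
      \<and> (wrec i w ozero \<longrightarrow> fst v = fst w)
      \<and> (\<forall>b. wrec i w (osucc b) \<longrightarrow> wrec (other i) v b = wrec (other i) w b)
      \<and> (\<forall>l. is_limit l \<and> wrec i w l \<longrightarrow> lim_par l (wrec (other i) v) = lim_par l (wrec (other i) w))}"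

definition fa_prob :: "'a set \<Rightarrow> ('a set \<Rightarrow> real) \<Rightarrow> bool" where
  "fa_prob \<Omega> \<mu> \<longleftrightarrow> \<mu> \<Omega> = 1 \<and> (\<forall>A. A \<subseteq> \<Omega> \<longrightarrow> 0 \<le> \<mu> A) \<and>
     (\<forall>A B. A \<subseteq> \<Omega> \<and> B \<subseteq> \<Omega> \<and> A \<inter> B = {} \<longrightarrow> \<mu> (A \<union> B) = \<mu> A + \<mu> B)"

end

theory Submission
  imports Defs "HOL-Probability.Probability_Mass_Function"
begin

(*
  For a finite set S of ordinals, T_S(w) is the law of a random world obtained from w by
  keeping i's record, keeping the coin if w_i(0) = 1 and tossing it otherwise, and rebuilding
  j's record: a bit that i knows (w_i(beta+1) = 1) is copied from w, a bit at a position in S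
  is a fair coin, and all other bits are 0, except that below each limit lambda whose parity
  is known to i or lies in S a single 1 is placed right after the last position below lambda
  that is known, in S, or such a limit.  Of the two successors of that position, the one
  making lambda-par equal to that of w_j (if w_i(lambda) = 1) or to a fair coin is chosen.
  The rebuilt records have finite support, so they are records of length kappa, and T_S
  satisfies (a)-(c), and (d)-(f) for the ordinals in S; for (f), the rebuilt record below
  beta in S depends only on w below alpha.  Each of these conditions is closed in the
  product topology of [0,1]^(W x Pow W), so by Tychonoff's theorem a cluster point of the
  net (T_S), S finite, satisfies all of them.
*)

section \<open>Successors, limits and parity\<close>

locale unbounded_wellorder =
  fixes k_type :: "'k::wellorder itself"
  assumes gt_ex: "\<exists>y::'k. x < y"
begin

lemma ozero_le [simp]: "ozero \<le> (x::'k)"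
  unfolding ozero_def by (rule Least_le) simp

lemma less_osucc [simp]: "x < osucc (x::'k)"
  unfolding osucc_def using gt_ex[of x] by (rule LeastI_ex)

lemma osucc_le_iff: "osucc (x::'k) \<le> y \<longleftrightarrow> x < y"
  using less_osucc[of x] order_less_le_trans[of x "osucc x" y]
  unfolding osucc_def by (auto intro: Least_le)

lemma less_osucc_iff: "y < osucc (x::'k) \<longleftrightarrow> y \<le> x"
  by (meson not_le osucc_le_iff)

lemma strict_mono_osucc: "strict_mono (osucc :: 'k \<Rightarrow> 'k)"
  by (rule strict_monoI) (simp add: less_osucc_iff osucc_le_iff)

lemma osucc_less_limit: "is_limit l \<Longrightarrow> x < l \<Longrightarrow> osucc (x::'k) < l"
  unfolding is_limit_def by (meson osucc_le_iff order_le_less_trans)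

lemma ozero_less_limit: "is_limit l \<Longrightarrow> ozero < (l::'k)"
  unfolding is_limit_def using ozero_le order_le_less_trans by blast

lemma not_less_ozero: "\<not> x < (ozero::'k)"
  using ozero_le[of x] by (rule leD)

lemma zero_or_limit_neq_osucc: "l = ozero \<or> is_limit l \<Longrightarrow> l \<noteq> osucc (x::'k)"
  unfolding is_limit_def by (metis less_osucc less_osucc_iff not_le ozero_le)

lemma ordinal_cases:
  obtains (zero) "x = (ozero::'k)" | (limit) "is_limit x" | (succ) y where "x = osucc y"
proof (cases "x = ozero \<or> is_limit x")
  case True
  with zero limit show ?thesis by blast
next
  case False
  hence "ozero < x" using ozero_le[of x] by (auto simp: order_le_less)
  with False obtain y where "y < x" "\<forall>z. y < z \<longrightarrow> \<not> z < x"
    unfolding is_limit_def by blast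
  hence "osucc y \<le> x" "\<not> osucc y < x" by (simp_all add: osucc_le_iff)
  hence "x = osucc y" by simp
  with succ show ?thesis .
qed

lemma funpow_osucc_decomposition: "\<exists>l n. (l = ozero \<or> is_limit l) \<and> (x::'k) = (osucc ^^ n) l"
proof (induction x rule: less_induct)
  case (less x)
  show ?case
  proof (cases x rule: ordinal_cases)
    case zero
    then show ?thesis by (intro exI[of _ x] exI[of _ 0]) simp
  next
    case limit
    then show ?thesis by (intro exI[of _ x] exI[of _ 0]) simp
  next
    case (succ y)
    then obtain l n where "l = ozero \<or> is_limit l" "y = (osucc ^^ n) l"
      using less less_osucc by blast
    with succ show ?thesis by (intro exI[of _ l] exI[of _ "Suc n"]) simp
  qed
qed

lemma funpow_osucc_exponent_unique:
  assumes "l = ozero \<or> is_limit l" "l' = ozero \<or> is_limit l'"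
    and "(osucc ^^ n) l = (osucc ^^ m) (l'::'k)"
  shows "n = m"
  using assms(3)
proof (induction n arbitrary: m)
  case 0
  with zero_or_limit_neq_osucc[OF assms(1)] show ?case by (cases m) auto
next
  case (Suc n)
  show ?case
  proof (cases m)
    case 0
    with Suc.prems zero_or_limit_neq_osucc[OF assms(2)] show ?thesis by auto
  next
    case (Suc m')
    with Suc.prems have "(osucc ^^ n) l = (osucc ^^ m') l'"
      using strict_mono_imp_inj_on[OF strict_mono_osucc] by (simp add: inj_eq)
    with Suc.IH Suc show ?thesis by simp
  qed
qed

lemma ord_even_osucc: "ord_even (osucc (x::'k)) \<longleftrightarrow> \<not> ord_even x"
proof -
  obtain l n where l: "l = ozero \<or> is_limit l" and x: "x = (osucc ^^ n) l"
    using funpow_osucc_decomposition by blast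
  have "ord_even ((osucc ^^ k) l) \<longleftrightarrow> even k" for k
  proof
    assume "ord_even ((osucc ^^ k) l)"
    then obtain l' k' where "l' = ozero \<or> is_limit l'" "(osucc ^^ k) l = (osucc ^^ k') l'" "even k'"
      unfolding ord_even_def by blast
    with l show "even k" using funpow_osucc_exponent_unique by blast
  next
    assume "even k"
    with l show "ord_even ((osucc ^^ k) l)" unfolding ord_even_def by blast
  qed
  from this[of n] this[of "Suc n"] show ?thesis by (simp add: x)
qed

lemma finite_if_is_record_kappa:
  assumes "is_record_kappa r" shows "finite {x::'k. r x}"
proof (rule ccontr)
  assume infinite: "infinite {x. r x}"
  obtain g where "\<forall>b. g \<le> b \<longrightarrow> \<not> r b"
    using assms unfolding is_record_kappa_def by blast
  hence "{x. r x} = {x. r x \<and> x < g}" by (meson leI)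
  hence ex: "\<exists>x. infinite {y. r y \<and> y < x}" using infinite by auto
  define l where "l = (LEAST x. infinite {y. r y \<and> y < x})"
  have infinite_l: "infinite {y. r y \<and> y < l}"
    unfolding l_def using ex by (rule LeastI_ex)
  have finite_below: "finite {y. r y \<and> y < z}" if "z < l" for z
    using not_less_Least[OF that[unfolded l_def]] by blast
  have "is_limit l"
  proof (cases l rule: ordinal_cases)
    case zero
    with infinite_l show ?thesis by (simp add: not_less_ozero)
  next
    case (succ y)
    hence "{y'. r y' \<and> y' < l} \<subseteq> insert y {y'. r y' \<and> y' < y}"
      by (auto simp: less_osucc_iff)
    moreover have "finite {y'. r y' \<and> y' < y}" using finite_below succ by simp
    ultimately show ?thesis using infinite_l finite_subset by blast
  qed
  then obtain \<gamma> where "\<gamma> < l" "zero_tail l r \<gamma>"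
    using assms unfolding is_record_kappa_def by blast
  hence "{y. r y \<and> y < l} \<subseteq> {y. r y \<and> y < \<gamma>}"
    unfolding zero_tail_def by (auto intro: leI)
  with infinite_l finite_below[OF \<open>\<gamma> < l\<close>] show False
    using finite_subset by blast
qed

lemma is_record_kappa_if_finite:
  assumes finite: "finite {x::'k. r x}" shows "is_record_kappa r"
proof -
  define bound where "bound R = osucc (Max (insert ozero R))" for R :: "'k set"
  have above_bound: "\<not> r b" if "R \<subseteq> {x. r x}" "r b \<Longrightarrow> b \<in> R" "bound R \<le> b" for R b
  proof
    assume "r b"
    with that have "b \<le> Max (insert ozero R)"
      using finite_subset[OF _ finite] by (intro Max_ge) auto
    with \<open>bound R \<le> b\<close> show False by (simp add: bound_def osucc_le_iff)
  qed
  have "\<exists>g<l. zero_tail l r g" if l: "is_limit l" for l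
  proof (intro exI conjI)
    let ?R = "{x. r x \<and> x < l}"
    have "Max (insert ozero ?R) < l"
      using finite_subset[OF _ finite] ozero_less_limit[OF l] by (subst Max_less_iff) auto
    thus "bound ?R < l" by (simp add: bound_def osucc_less_limit[OF l])
    show "zero_tail l r (bound ?R)"
      unfolding zero_tail_def using above_bound[of ?R] by blast
  qed
  moreover have "\<forall>b. bound {x. r x} \<le> b \<longrightarrow> \<not> r b"
    using above_bound[of "{x. r x}"] by blast
  ultimately show ?thesis unfolding is_record_kappa_def by blast
qed

lemma is_record_kappa_iff_finite: "is_record_kappa r \<longleftrightarrow> finite {x::'k. r x}"
  using finite_if_is_record_kappa is_record_kappa_if_finite by blast

lemma o_lim_eq_osucc_last:
  assumes l: "is_limit l" and "c < l" "r c" and "\<forall>x. c < x \<and> x < l \<longrightarrow> \<not> r x"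
  shows "o_lim l r = osucc (c::'k)"
  unfolding o_lim_def
proof (rule Least_equality)
  show "osucc c < l \<and> zero_tail l r (osucc c)"
    using osucc_less_limit[OF l] assms(2,4) unfolding zero_tail_def by (simp add: osucc_le_iff)
  fix y assume "y < l \<and> zero_tail l r y"
  with assms(2,3) show "osucc c \<le> y"
    unfolding zero_tail_def osucc_le_iff by (meson not_less)
qed

end

lemma o_lim_cong: "(\<And>x. x < l \<Longrightarrow> r x = r' x) \<Longrightarrow> o_lim l r = o_lim l r'"
  unfolding o_lim_def zero_tail_def by metis

lemma lim_par_cong: "(\<And>x. x < l \<Longrightarrow> r x = r' x) \<Longrightarrow> lim_par l r = lim_par l r'"
  unfolding lim_par_def using o_lim_cong by metis
definition mk_world :: "player \<Rightarrow> coin \<Rightarrow> ('k \<Rightarrow> bool) \<Rightarrow> ('k \<Rightarrow> bool) \<Rightarrow> 'k world" where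
  "mk_world i c x y = (c, if i = Pa then x else y, if i = Pa then y else x)"

lemma mk_world_simps [simp]:
  "fst (mk_world i c x y) = c" "wrec i (mk_world i c x y) = x" "wrec (other i) (mk_world i c x y) = y"
  by (cases i; simp add: mk_world_def wrec_def)+

lemma restr_mk_world:
  "restr b (mk_world i c x y) = mk_world i c (\<lambda>z. z < b \<and> x z) (\<lambda>z. z < b \<and> y z)"
  unfolding restr_def mk_world_def wrec_def by (cases i) simp_all

lemma restr_eqD:
  assumes "restr a u = restr a v"
  shows "fst u = fst v" and "z < a \<Longrightarrow> wrec p u z = wrec p v z"
  using assms by (cases p; auto simp: restr_def wrec_def fun_eq_iff)+

lemma Wk_iff: "w \<in> Wk \<longleftrightarrow> is_record_kappa (wrec i w) \<and> is_record_kappa (wrec (other i) w)"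
  by (cases i) (auto simp: Wk_def)

lemma measure_pmf_eq_1: "set_pmf p \<subseteq> A \<Longrightarrow> measure_pmf.prob p A = 1"
  by (simp add: measure_pmf.prob_eq_1 AE_measure_pmf_iff subset_eq)

lemma fa_prob_measure_pmf: "set_pmf p \<subseteq> \<Omega> \<Longrightarrow> fa_prob \<Omega> (measure_pmf.prob p)"
  unfolding fa_prob_def by (simp add: measure_pmf_eq_1 measure_pmf.finite_measure_Union)

lemma measure_pmf_eq_half_if_flip:
  assumes invariant: "map_pmf f p = p" and flip: "\<And>x. x \<in> set_pmf p \<Longrightarrow> f x \<in> A \<longleftrightarrow> x \<notin> A"
  shows "measure_pmf.prob p A = 1/2"
proof -
  have "measure_pmf.prob p A = measure_pmf.prob p (f -` A)"
    by (metis invariant measure_map_pmf)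
  also have "\<dots> = measure_pmf.prob p (UNIV - A)"
    using flip by (intro measure_pmf.finite_measure_eq_AE) (auto simp: AE_measure_pmf_iff)
  also have "\<dots> = 1 - measure_pmf.prob p A"
    using measure_pmf.prob_compl[of A p] by simp
  finally show ?thesis by simp
qed

lemma measure_map_pmf_of_set_eq_half:
  assumes "finite \<Omega>" "\<Omega> \<noteq> {}" and involution: "\<And>x. x \<in> \<Omega> \<Longrightarrow> f x \<in> \<Omega> \<and> f (f x) = x"
    and flip: "\<And>x. x \<in> \<Omega> \<Longrightarrow> \<phi> (f x) \<in> A \<longleftrightarrow> \<phi> x \<notin> A"
  shows "measure_pmf.prob (map_pmf \<phi> (pmf_of_set \<Omega>)) A = 1/2"
proof -
  have "bij_betw f \<Omega> \<Omega>" by (rule bij_betw_byWitness[where f' = f]) (use involution in auto)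
  with assms(1,2) have "map_pmf f (pmf_of_set \<Omega>) = pmf_of_set \<Omega>"
    by (intro map_pmf_of_set_bij_betw)
  hence "measure_pmf.prob (pmf_of_set \<Omega>) (\<phi> -` A) = 1/2"
    using flip assms(1,2) by (intro measure_pmf_eq_half_if_flip) auto
  thus ?thesis by simp
qed

lemma measure_map_pmf_cong:
  "(\<And>x. x \<in> set_pmf p \<Longrightarrow> f x \<in> A \<longleftrightarrow> g x \<in> A)
    \<Longrightarrow> measure_pmf.prob (map_pmf f p) A = measure_pmf.prob (map_pmf g p) A"
  by (simp, intro measure_pmf.finite_measure_eq_AE) (auto simp: AE_measure_pmf_iff)

section \<open>Parity marks\<close>

definition known_positions :: "('k::wellorder \<Rightarrow> bool) \<Rightarrow> 'k set" where
  "known_positions r = {c. r (osucc c)}"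

definition parity_limits :: "('k::wellorder \<Rightarrow> bool) \<Rightarrow> 'k set \<Rightarrow> 'k set" where
  "parity_limits r S = {l. is_limit l \<and> (r l \<or> l \<in> S)}"

definition last_mark :: "('k::wellorder \<Rightarrow> bool) \<Rightarrow> 'k set \<Rightarrow> 'k \<Rightarrow> 'k" where
  "last_mark r S l =
     Max (insert ozero {x. x < l \<and> x \<in> known_positions r \<union> S \<union> parity_limits r S})"

definition target_parity :: "('k::wellorder \<Rightarrow> bool) \<Rightarrow> ('k \<Rightarrow> bool) \<Rightarrow> 'k set \<Rightarrow> 'k \<Rightarrow> bool" where
  "target_parity r s \<tau> l = (if r l then lim_par l s else l \<in> \<tau>)"

definition parity_mark ::
  "('k::wellorder \<Rightarrow> bool) \<Rightarrow> ('k \<Rightarrow> bool) \<Rightarrow> 'k set \<Rightarrow> 'k set \<Rightarrow> 'k \<Rightarrow> 'k" where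
  "parity_mark r s S \<tau> l =
     (let m = last_mark r S l in
      if ord_even (osucc (osucc m)) = target_parity r s \<tau> l then osucc m else osucc (osucc m))"

definition resampled_record ::
  "('k::wellorder \<Rightarrow> bool) \<Rightarrow> ('k \<Rightarrow> bool) \<Rightarrow> 'k set \<Rightarrow> 'k set \<Rightarrow> 'k set \<Rightarrow> 'k \<Rightarrow> bool" where
  "resampled_record r s S \<sigma> \<tau> c =
     (if r (osucc c) then s c
      else if c \<in> S then c \<in> \<sigma>
      else c \<in> parity_mark r s S \<tau> ` parity_limits r S)"

context unbounded_wellorder
begin

lemma parity_mark_cong_below:
  assumes "l < a" "\<And>z. z < a \<Longrightarrow> r z = r' z" "\<And>z. z < a \<Longrightarrow> s z = s' z"
  shows "parity_mark r s S \<tau> l = parity_mark r' s' S \<tau> (l::'k)"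
proof -
  have "x \<in> known_positions r \<longleftrightarrow> x \<in> known_positions r'" "x \<in> parity_limits r S \<longleftrightarrow> x \<in> parity_limits r' S"
    if "x < l" for x
  proof -
    have "osucc x < a" "x < a"
      using that \<open>l < a\<close> osucc_le_iff[of x l] by (simp_all add: order.strict_trans1 order.strict_trans)
    with assms(2) show "x \<in> known_positions r \<longleftrightarrow> x \<in> known_positions r'"
      and "x \<in> parity_limits r S \<longleftrightarrow> x \<in> parity_limits r' S"
      by (simp_all add: known_positions_def parity_limits_def)
  qed
  hence "{x. x < l \<and> x \<in> known_positions r \<union> S \<union> parity_limits r S}
      = {x. x < l \<and> x \<in> known_positions r' \<union> S \<union> parity_limits r' S}" by blast
  hence "last_mark r S l = last_mark r' S l" unfolding last_mark_def by simp
  moreover have "target_parity r s \<tau> l = target_parity r' s' \<tau> l"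
    unfolding target_parity_def using assms lim_par_cong[of l s s'] by auto
  ultimately show ?thesis unfolding parity_mark_def by simp
qed

context
  fixes r s :: "'k \<Rightarrow> bool" and S :: "'k set"
  assumes finite_r: "finite {x. r x}" and finite_S: "finite S"
begin

lemma finite_known_positions: "finite (known_positions r)"
  unfolding known_positions_def
  using finite_vimageI[OF finite_r strict_mono_imp_inj_on[OF strict_mono_osucc]]
  by (simp add: vimage_def)

lemma finite_parity_limits: "finite (parity_limits r S)"
  unfolding parity_limits_def
  by (rule finite_subset[of _ "{x. r x} \<union> S"]) (use finite_r finite_S in auto)

lemma
  assumes "is_limit l"
  shows last_mark_less: "last_mark r S l < l"
    and le_last_mark: "x < l \<Longrightarrow> x \<in> known_positions r \<union> S \<union> parity_limits r S \<Longrightarrow> x \<le> last_mark r S l"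
proof -
  let ?M = "insert ozero {x. x < l \<and> x \<in> known_positions r \<union> S \<union> parity_limits r S}"
  have "finite ?M"
    using finite_known_positions finite_parity_limits finite_S by (auto intro: finite_subset)
  thus "last_mark r S l < l"
    unfolding last_mark_def using ozero_less_limit[OF assms] by (subst Max_less_iff) auto
  show "x < l \<Longrightarrow> x \<in> known_positions r \<union> S \<union> parity_limits r S \<Longrightarrow> x \<le> last_mark r S l"
    unfolding last_mark_def using \<open>finite ?M\<close> by (intro Max_ge) auto
qed

lemma
  assumes "is_limit l"
  shows last_mark_less_parity_mark: "last_mark r S l < parity_mark r s S \<tau> l"
    and parity_mark_less: "parity_mark r s S \<tau> l < l"
proof -
  let ?m = "last_mark r S l"
  have "osucc ?m < l" "osucc (osucc ?m) < l"
    using osucc_less_limit[OF assms] last_mark_less[OF assms] by simp_all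
  moreover have "?m < osucc (osucc ?m)" using less_osucc order.strict_trans by blast
  ultimately show "?m < parity_mark r s S \<tau> l" "parity_mark r s S \<tau> l < l"
    by (simp_all add: parity_mark_def Let_def)
qed

lemma
  assumes l: "l \<in> parity_limits r S"
  shows resampled_record_parity_mark: "resampled_record r s S \<sigma> \<tau> (parity_mark r s S \<tau> l)"
    and resampled_record_after_parity_mark:
      "parity_mark r s S \<tau> l < x \<Longrightarrow> x < l \<Longrightarrow> \<not> resampled_record r s S \<sigma> \<tau> x"
proof -
  have "is_limit l" using l by (simp add: parity_limits_def)
  note mark = last_mark_less_parity_mark[OF this, of \<tau>] parity_mark_less[OF this, of \<tau>]
  have unconstrained: "x \<notin> known_positions r" "x \<notin> S" if "last_mark r S l < x" "x < l" for x
    using le_last_mark[OF \<open>is_limit l\<close> that(2)] that(1) by auto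
  show "resampled_record r s S \<sigma> \<tau> (parity_mark r s S \<tau> l)"
    using unconstrained[OF mark] l unfolding resampled_record_def known_positions_def by auto
  assume x: "parity_mark r s S \<tau> l < x" "x < l"
  have "x \<noteq> parity_mark r s S \<tau> l'" if l': "l' \<in> parity_limits r S" for l'
  proof -
    have "is_limit l'" using l' by (simp add: parity_limits_def)
    consider "l' < l" | "l' = l" | "l < l'" by fastforce
    thus ?thesis
    proof cases
      case 1
      with le_last_mark[OF \<open>is_limit l\<close>] l' have "l' \<le> last_mark r S l" by blast
      with mark(1) x(1) parity_mark_less[OF \<open>is_limit l'\<close>, of \<tau>]
      have "parity_mark r s S \<tau> l' < x" by (meson order.strict_trans order.strict_trans1)
      thus ?thesis by simp
    next
      case 3
      with le_last_mark[OF \<open>is_limit l'\<close>] l have "l \<le> last_mark r S l'" by blast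
      with x(2) last_mark_less_parity_mark[OF \<open>is_limit l'\<close>, of \<tau>]
      have "x < parity_mark r s S \<tau> l'" by (meson order.strict_trans order.strict_trans2)
      thus ?thesis by simp
    qed (use x in simp)
  qed
  with unconstrained[of x] mark x show "\<not> resampled_record r s S \<sigma> \<tau> x"
    unfolding resampled_record_def known_positions_def by auto
qed

lemma lim_par_resampled_record:
  assumes "l \<in> parity_limits r S"
  shows "lim_par l (resampled_record r s S \<sigma> \<tau>) = target_parity r s \<tau> l"
proof -
  have "is_limit l" using assms by (simp add: parity_limits_def)
  have "o_lim l (resampled_record r s S \<sigma> \<tau>) = osucc (parity_mark r s S \<tau> l)"
    using parity_mark_less[OF \<open>is_limit l\<close>] resampled_record_parity_mark[OF assms]
      resampled_record_after_parity_mark[OF assms]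
    by (intro o_lim_eq_osucc_last[OF \<open>is_limit l\<close>]) auto
  thus ?thesis unfolding lim_par_def parity_mark_def Let_def by (auto simp: ord_even_osucc)
qed

lemma finite_resampled_record: "finite {x. resampled_record r s S \<sigma> \<tau> x}"
  by (rule finite_subset[of _ "known_positions r \<union> S \<union> parity_mark r s S \<tau> ` parity_limits r S"])
    (use finite_known_positions finite_parity_limits finite_S in
      \<open>auto simp: resampled_record_def known_positions_def\<close>)

lemma le_if_parity_mark_less:
  assumes "l \<in> parity_limits r S" "b \<in> S" "parity_mark r s S \<tau> l < b"
  shows "l \<le> b"
proof (rule ccontr)
  assume "\<not> l \<le> b"
  moreover have "is_limit l" using assms(1) by (simp add: parity_limits_def)
  ultimately have "b \<le> last_mark r S l" using le_last_mark assms(2) by auto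
  with last_mark_less_parity_mark[OF \<open>is_limit l\<close>, of \<tau>] assms(3) show False by simp
qed

lemma parity_mark_transfer_below:
  assumes "b \<in> S" "b < a" and agree: "\<forall>y<a. r y = r' y \<and> s y = s' y"
    and "z < b" "z \<in> parity_mark r s S \<tau> ` parity_limits r S"
  shows "z \<in> parity_mark r' s' S \<tau> ` parity_limits r' S"
proof -
  obtain l where l: "l \<in> parity_limits r S" "z = parity_mark r s S \<tau> l" using assms(5) by blast
  with le_if_parity_mark_less assms(1,2,4) have "l < a" by fastforce
  with l agree have "l \<in> parity_limits r' S" by (simp add: parity_limits_def)
  with l parity_mark_cong_below[of l a r r' s s'] \<open>l < a\<close> agree show ?thesis by simp
qed

end

lemma resampled_record_cong_below:
  assumes finite: "finite {x. r x}" "finite {x. r' x}" "finite S" and "b \<in> S" "b < a"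
    and agree: "\<And>z. z < a \<Longrightarrow> r z = r' z" "\<And>z. z < a \<Longrightarrow> s z = s' z" and "z < (b::'k)"
  shows "resampled_record r s S \<sigma> \<tau> z = resampled_record r' s' S \<sigma> \<tau> z"
proof -
  have "osucc z < a" "z < a"
    using \<open>z < b\<close> \<open>b < a\<close> osucc_le_iff[of z b] by (simp_all add: order.strict_trans1 order.strict_trans)
  with agree have "r (osucc z) = r' (osucc z)" "s z = s' z" by simp_all
  moreover have "z \<in> parity_mark r s S \<tau> ` parity_limits r S \<longleftrightarrow> z \<in> parity_mark r' s' S \<tau> ` parity_limits r' S"
    using parity_mark_transfer_below[where r = r and r' = r' and s = s and s' = s' and \<tau> = \<tau>,
        OF finite(1,3) \<open>b \<in> S\<close> \<open>b < a\<close> _ \<open>z < b\<close>]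
      parity_mark_transfer_below[where r = r' and r' = r and s = s' and s' = s and \<tau> = \<tau>,
        OF finite(2,3) \<open>b \<in> S\<close> \<open>b < a\<close> _ \<open>z < b\<close>]
      agree
    by auto
  ultimately show ?thesis unfolding resampled_record_def by simp
qed

end

section \<open>Resampling a world\<close>

(* A noise value (c, sigma, tau) consists of a coin toss c, the set sigma of positions in S
   whose bit is 1 and the set tau of limits in S whose parity is even. *)
definition noise :: "'k set \<Rightarrow> (coin \<times> 'k set \<times> 'k set) set" where
  "noise S = UNIV \<times> Pow S \<times> Pow S"

definition resample :: "player \<Rightarrow> 'k::wellorder world \<Rightarrow> 'k set \<Rightarrow> coin \<times> 'k set \<times> 'k set \<Rightarrow> 'k world" where
  "resample i w S = (\<lambda>(c, \<sigma>, \<tau>).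
     mk_world i (if wrec i w ozero then fst w else c) (wrec i w)
       (resampled_record (wrec i w) (wrec (other i) w) S \<sigma> \<tau>))"

definition resample_pmf :: "player \<Rightarrow> 'k::wellorder set \<Rightarrow> 'k world \<Rightarrow> 'k world pmf" where
  "resample_pmf i S w = map_pmf (resample i w S) (pmf_of_set (noise S))"

fun flip_coin :: "coin \<Rightarrow> coin" where
  "flip_coin H = T" | "flip_coin T = H"

definition toggle :: "'a \<Rightarrow> 'a set \<Rightarrow> 'a set" where
  "toggle x X = (if x \<in> X then X - {x} else insert x X)"

lemma flip_coin_eq_iff: "flip_coin c = d \<longleftrightarrow> c \<noteq> d"
  by (cases c; cases d) simp_all

lemma flip_coin_flip_coin [simp]: "flip_coin (flip_coin c) = c"
  by (cases c) simp_all

lemma finite_noise: "finite S \<Longrightarrow> finite (noise S)"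
proof -
  have "finite (UNIV :: coin set)"
    by (rule finite_subset[of _ "{H, T}"]) (use coin.exhaust in auto)
  thus "finite S \<Longrightarrow> finite (noise S)"
    unfolding noise_def by (intro finite_cartesian_product) simp_all
qed

lemma noise_nonempty: "noise S \<noteq> {}"
  by (auto simp: noise_def)

lemma resample_simps [simp]:
  "fst (resample i w S (c, \<sigma>, \<tau>)) = (if wrec i w ozero then fst w else c)"
  "wrec i (resample i w S (c, \<sigma>, \<tau>)) = wrec i w"
  "wrec (other i) (resample i w S (c, \<sigma>, \<tau>)) = resampled_record (wrec i w) (wrec (other i) w) S \<sigma> \<tau>"
  by (simp_all add: resample_def)

lemma resample_eq_if_Pset:
  assumes "u \<in> Pset i w"
  shows "resample i u S = resample i w S"
proof -
  have own: "wrec i u = wrec i w" and coin: "wrec i w ozero \<Longrightarrow> fst u = fst w"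
    and bits: "\<And>b. wrec i w (osucc b) \<Longrightarrow> wrec (other i) u b = wrec (other i) w b"
    and parities: "\<And>l. is_limit l \<Longrightarrow> wrec i w l \<Longrightarrow>
      lim_par l (wrec (other i) u) = lim_par l (wrec (other i) w)"
    using assms unfolding Pset_def by auto
  have "parity_mark (wrec i w) (wrec (other i) u) S \<tau> l = parity_mark (wrec i w) (wrec (other i) w) S \<tau> l"
    if "l \<in> parity_limits (wrec i w) S" for \<tau> l
    using that parities unfolding parity_mark_def target_parity_def parity_limits_def by auto
  hence "resampled_record (wrec i w) (wrec (other i) u) S \<sigma> \<tau>
      = resampled_record (wrec i w) (wrec (other i) w) S \<sigma> \<tau>" for \<sigma> \<tau>
    unfolding resampled_record_def fun_eq_iff using bits by (auto simp: image_def)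
  thus ?thesis unfolding resample_def using own coin by auto
qed

context unbounded_wellorder
begin

lemma finite_wrec: "w \<in> Wk \<Longrightarrow> finite {x::'k. wrec p w x}"
  using Wk_iff[of w p] by (simp add: is_record_kappa_iff_finite)

context
  fixes i :: player and w :: "'k world" and S :: "'k set"
  assumes w: "w \<in> Wk" and finite_S: "finite S"
begin

lemma resample_in_Wk: "resample i w S \<omega> \<in> Wk"
  using w finite_resampled_record[OF finite_wrec[OF w] finite_S]
  by (auto simp: Wk_iff[of _ i] resample_def is_record_kappa_iff_finite split: prod.splits)

lemma resample_in_Pset: "resample i w S \<omega> \<in> Pset i w"
  using resample_in_Wk lim_par_resampled_record[OF finite_wrec[OF w] finite_S]
  by (auto simp: Pset_def resample_def resampled_record_def target_parity_def parity_limits_def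
      split: prod.splits)

lemma set_resample_pmf: "set_pmf (resample_pmf i S w) = resample i w S ` noise S"
  by (simp add: resample_pmf_def finite_noise[OF finite_S] noise_nonempty)

lemma measure_resample_pmf_eq_1:
  "(\<And>c \<sigma> \<tau>. \<sigma> \<subseteq> S \<Longrightarrow> \<tau> \<subseteq> S \<Longrightarrow> resample i w S (c, \<sigma>, \<tau>) \<in> A)
    \<Longrightarrow> measure_pmf.prob (resample_pmf i S w) A = 1"
  by (rule measure_pmf_eq_1) (auto simp: set_resample_pmf noise_def)

lemma measure_resample_pmf_eq_half:
  assumes "\<And>c \<sigma> \<tau>. \<sigma> \<subseteq> S \<Longrightarrow> \<tau> \<subseteq> S \<Longrightarrow> f (c, \<sigma>, \<tau>) \<in> noise S \<and> f (f (c, \<sigma>, \<tau>)) = (c, \<sigma>, \<tau>)"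
    and "\<And>c \<sigma> \<tau>. \<sigma> \<subseteq> S \<Longrightarrow> \<tau> \<subseteq> S \<Longrightarrow>
      resample i w S (f (c, \<sigma>, \<tau>)) \<in> A \<longleftrightarrow> resample i w S (c, \<sigma>, \<tau>) \<notin> A"
  shows "measure_pmf.prob (resample_pmf i S w) A = 1/2"
  unfolding resample_pmf_def
proof (rule measure_map_pmf_of_set_eq_half[OF finite_noise[OF finite_S] noise_nonempty])
  fix \<omega> assume "\<omega> \<in> noise S"
  then obtain c \<sigma> \<tau> where "\<omega> = (c, \<sigma>, \<tau>)" "\<sigma> \<subseteq> S" "\<tau> \<subseteq> S" by (auto simp: noise_def)
  with assms show "f \<omega> \<in> noise S \<and> f (f \<omega>) = \<omega>"
    and "resample i w S (f \<omega>) \<in> A \<longleftrightarrow> resample i w S \<omega> \<notin> A" by simp_all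
qed

lemma measure_resample_pmf_coin:
  "measure_pmf.prob (resample_pmf i S w) {u \<in> Wk. fst u = fst w} = (if wrec i w ozero then 1 else 1/2)"
proof (cases "wrec i w ozero")
  case True
  have "measure_pmf.prob (resample_pmf i S w) {u \<in> Wk. fst u = fst w} = 1"
    by (rule measure_resample_pmf_eq_1) (simp add: True resample_in_Wk)
  with True show ?thesis by simp
next
  case False
  have "measure_pmf.prob (resample_pmf i S w) {u \<in> Wk. fst u = fst w} = 1/2"
    by (rule measure_resample_pmf_eq_half[where f = "\<lambda>(c, \<sigma>, \<tau>). (flip_coin c, \<sigma>, \<tau>)"])
      (simp_all add: False resample_in_Wk noise_def flip_coin_eq_iff)
  with False show ?thesis by simp
qed

lemma measure_resample_pmf_bit:
  assumes "b \<in> S"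
  shows "measure_pmf.prob (resample_pmf i S w) {u \<in> Wk. wrec (other i) u b = wrec (other i) w b}
    = (if wrec i w (osucc b) then 1 else 1/2)"
proof (cases "wrec i w (osucc b)")
  case True
  have "measure_pmf.prob (resample_pmf i S w) {u \<in> Wk. wrec (other i) u b = wrec (other i) w b} = 1"
    by (rule measure_resample_pmf_eq_1) (simp add: True resample_in_Wk resampled_record_def)
  with True show ?thesis by simp
next
  case False
  have "measure_pmf.prob (resample_pmf i S w) {u \<in> Wk. wrec (other i) u b = wrec (other i) w b} = 1/2"
    by (rule measure_resample_pmf_eq_half[where f = "\<lambda>(c, \<sigma>, \<tau>). (c, toggle b \<sigma>, \<tau>)"])
      (use assms in \<open>auto simp: False resample_in_Wk noise_def resampled_record_def toggle_def\<close>)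
  with False show ?thesis by simp
qed

lemma measure_resample_pmf_parity:
  assumes "l \<in> S" "is_limit l"
  shows "measure_pmf.prob (resample_pmf i S w)
      {u \<in> Wk. lim_par l (wrec (other i) u) = lim_par l (wrec (other i) w)}
    = (if wrec i w l then 1 else 1/2)"
proof -
  have "l \<in> parity_limits (wrec i w) S" using assms by (simp add: parity_limits_def)
  note parity = lim_par_resampled_record[OF finite_wrec[OF w] finite_S this]
  show ?thesis
  proof (cases "wrec i w l")
    case True
    have "measure_pmf.prob (resample_pmf i S w)
        {u \<in> Wk. lim_par l (wrec (other i) u) = lim_par l (wrec (other i) w)} = 1"
      by (rule measure_resample_pmf_eq_1) (simp add: True resample_in_Wk parity target_parity_def)
    with True show ?thesis by simp
  next
    case False
    have "measure_pmf.prob (resample_pmf i S w)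
        {u \<in> Wk. lim_par l (wrec (other i) u) = lim_par l (wrec (other i) w)} = 1/2"
      by (rule measure_resample_pmf_eq_half[where f = "\<lambda>(c, \<sigma>, \<tau>). (c, \<sigma>, toggle l \<tau>)"])
        (use assms in \<open>auto simp: False resample_in_Wk parity noise_def target_parity_def toggle_def\<close>)
    with False show ?thesis by simp
  qed
qed

end

lemma restr_resample_eq:
  assumes "u \<in> Wk" "v \<in> Wk" "finite S" "b \<in> S" "b < a" "restr a u = restr a v"
  shows "restr b (resample i u S \<omega>) = restr b (resample i v S (\<omega>::coin \<times> 'k set \<times> 'k set))"
proof -
  obtain c \<sigma> \<tau> where \<omega>: "\<omega> = (c, \<sigma>, \<tau>)" by (cases \<omega>)
  have agree: "\<And>z. z < a \<Longrightarrow> wrec p u z = wrec p v z" for p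
    using restr_eqD(2)[OF assms(6)] by blast
  have "wrec i u ozero = wrec i v ozero" using agree \<open>b < a\<close> by (simp add: order.strict_trans1)
  moreover have "(\<lambda>z. z < b \<and> resampled_record (wrec i u) (wrec (other i) u) S \<sigma> \<tau> z)
      = (\<lambda>z. z < b \<and> resampled_record (wrec i v) (wrec (other i) v) S \<sigma> \<tau> z)"
    using resampled_record_cong_below[OF finite_wrec[OF assms(1)] finite_wrec[OF assms(2)] assms(3-5) agree agree]
    by auto
  moreover have "(\<lambda>z. z < b \<and> wrec i u z) = (\<lambda>z. z < b \<and> wrec i v z)"
    using agree \<open>b < a\<close> by (auto simp: fun_eq_iff)
  ultimately show ?thesis
    using restr_eqD(1)[OF assms(6)] by (simp add: \<omega> resample_def restr_mk_world)
qed

end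

section \<open>Type kernels as a limit\<close>

definition type_kernel_on ::
  "player \<Rightarrow> 'k::wellorder set \<Rightarrow> ('k world \<Rightarrow> 'k world set \<Rightarrow> real) \<Rightarrow> bool" where
  "type_kernel_on i S Ti \<longleftrightarrow> (\<forall>w \<in> Wk.
      fa_prob Wk (Ti w)
    \<and> (\<forall>u \<in> Pset i w. Ti u = Ti w)
    \<and> Ti w (Pset i w) = 1
    \<and> Ti w {u \<in> Wk. fst u = fst w} = (if wrec i w ozero then 1 else 1/2)
    \<and> (\<forall>b \<in> S. Ti w {u \<in> Wk. wrec (other i) u b = wrec (other i) w b}
                = (if wrec i w (osucc b) then 1 else 1/2))
    \<and> (\<forall>l \<in> S. is_limit l \<longrightarrow>
          Ti w {u \<in> Wk. lim_par l (wrec (other i) u) = lim_par l (wrec (other i) w)}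
            = (if wrec i w l then 1 else 1/2))
    \<and> (\<forall>b \<in> S. \<forall>a. b < a \<longrightarrow> (\<forall>u \<in> Wk. \<forall>v \<in> Wk. \<forall>E. E \<subseteq> W_at b \<longrightarrow>
          restr a u = restr a v \<longrightarrow> Ti u (preim b E) = Ti v (preim b E))))"

lemma type_kernel_on_subset: "type_kernel_on i S Ti \<Longrightarrow> S' \<subseteq> S \<Longrightarrow> type_kernel_on i S' Ti"
  unfolding type_kernel_on_def by blast

lemma type_kernel_on_UNIV: "(\<And>x. type_kernel_on i {x} Ti) \<Longrightarrow> type_kernel_on i UNIV Ti"
  unfolding type_kernel_on_def by blast

lemma closed_type_kernel_on: "closed {g. type_kernel_on i S (curry g)}"
  unfolding type_kernel_on_def fa_prob_def curry_def fun_eq_iff Ball_def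
  by (intro closed_Collect_all closed_Collect_imp closed_Collect_conj open_Collect_const
      closed_Collect_eq closed_Collect_le continuous_on_product_coordinates continuous_intros)

lemma (in unbounded_wellorder) type_kernel_on_resample_pmf:
  fixes S :: "'k set"
  assumes "finite S"
  shows "type_kernel_on i S (\<lambda>w. measure_pmf.prob (resample_pmf i S w))"
  unfolding type_kernel_on_def
proof (intro ballI conjI allI impI)
  fix w :: "'k world" assume w: "w \<in> Wk"
  from resample_in_Wk[OF w assms] set_resample_pmf[OF w assms]
  show "fa_prob Wk (measure_pmf.prob (resample_pmf i S w))"
    by (intro fa_prob_measure_pmf) auto
  show "measure_pmf.prob (resample_pmf i S w) (Pset i w) = 1"
    by (rule measure_resample_pmf_eq_1[OF w assms resample_in_Pset[OF w assms]])
  show "measure_pmf.prob (resample_pmf i S w) {u \<in> Wk. fst u = fst w} = (if wrec i w ozero then 1 else 1/2)"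
    by (rule measure_resample_pmf_coin[OF w assms])
  show "measure_pmf.prob (resample_pmf i S w) {u \<in> Wk. wrec (other i) u b = wrec (other i) w b}
      = (if wrec i w (osucc b) then 1 else 1/2)" if "b \<in> S" for b
    by (rule measure_resample_pmf_bit[OF w assms that])
  show "measure_pmf.prob (resample_pmf i S w)
      {u \<in> Wk. lim_par l (wrec (other i) u) = lim_par l (wrec (other i) w)}
      = (if wrec i w l then 1 else 1/2)" if "l \<in> S" "is_limit l" for l
    by (rule measure_resample_pmf_parity[OF w assms that])
  show "measure_pmf.prob (resample_pmf i S u) = measure_pmf.prob (resample_pmf i S w)"
    if "u \<in> Pset i w" for u
    unfolding resample_pmf_def resample_eq_if_Pset[OF that] ..
  show "measure_pmf.prob (resample_pmf i S u) (preim b E) = measure_pmf.prob (resample_pmf i S v) (preim b E)"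
    if "b \<in> S" "b < a" "u \<in> Wk" "v \<in> Wk" "restr a u = restr a v" for b a u v E
    unfolding resample_pmf_def
    by (rule measure_map_pmf_cong)
      (use that resample_in_Wk assms restr_resample_eq[OF that(3,4) assms that(1,2,5)] in
        \<open>simp add: preim_def\<close>)
qed

lemma unit_cube_cluster_point:
  fixes f :: "'i \<Rightarrow> 'a \<Rightarrow> real"
  assumes "F \<noteq> bot" and "\<And>i x. f i x \<in> {0..1}"
  obtains g where "\<And>C. closed C \<Longrightarrow> eventually (\<lambda>i. f i \<in> C) F \<Longrightarrow> g \<in> C"
proof -
  define K where "K = PiE UNIV (\<lambda>_::'a. {0..1::real})"
  have "compactin (product_topology (\<lambda>_. euclidean) UNIV) K"
    unfolding K_def compactin_PiE by simp
  hence "compact K" by (simp add: euclidean_product_topology)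
  moreover have "filtermap f F \<noteq> bot" using assms(1) by (simp add: filtermap_bot_iff)
  moreover have "eventually (\<lambda>x. x \<in> K) (filtermap f F)"
    using assms(2) by (simp add: eventually_filtermap K_def PiE_iff)
  ultimately obtain g where g: "inf (nhds g) (filtermap f F) \<noteq> bot"
    unfolding compact_filter by blast
  have "g \<in> C" if C: "closed C" "eventually (\<lambda>i. f i \<in> C) F" for C
  proof (rule ccontr)
    assume "g \<notin> C"
    with C(1) have "eventually (\<lambda>h. h \<notin> C) (nhds g)"
      by (simp add: eventually_nhds) (metis open_Compl Compl_iff)
    moreover have "eventually (\<lambda>h. h \<in> C) (filtermap f F)" using C(2) by (simp add: eventually_filtermap)
    ultimately have "eventually (\<lambda>_. False) (inf (nhds g) (filtermap f F))"
      unfolding eventually_inf by blast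
    with g show False by (simp add: eventually_False)
  qed
  thus thesis by (rule that)
qed

lemma (in unbounded_wellorder) ex_type_kernel_on_UNIV: "\<exists>Ti. type_kernel_on i (UNIV :: 'k set) Ti"
proof -
  let ?F = "finite_subsets_at_top (UNIV :: 'k set)"
  let ?\<mu> = "\<lambda>S (w, A). measure_pmf.prob (resample_pmf i S w) A"
  have "?\<mu> S p \<in> {0..1}" for S :: "'k set" and p by (cases p) simp
  then obtain g where g: "\<And>C. closed C \<Longrightarrow> eventually (\<lambda>S. ?\<mu> S \<in> C) ?F \<Longrightarrow> g \<in> C"
    using unit_cube_cluster_point[of ?F ?\<mu>, OF finite_subsets_at_top_neq_bot] by blast
  have "type_kernel_on i {x} (curry g)" for x
  proof -
    have "eventually (\<lambda>S. type_kernel_on i {x} (curry (?\<mu> S))) ?F"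
      unfolding eventually_finite_subsets_at_top
      by (intro exI[of _ "{x}"]) (auto intro: type_kernel_on_subset type_kernel_on_resample_pmf)
    thus ?thesis using g[OF closed_type_kernel_on] by simp
  qed
  thus ?thesis by (blast intro: type_kernel_on_UNIV)
qed

lemma unbounded_wellorder_if_initial_segments_smaller:
  assumes inf: "infinite (UNIV :: 'k::wellorder set)"
    and card: "\<forall>x::'k. (card_of {y. y < x}, card_of (UNIV :: 'k set)) \<in> ordLess"
  shows "unbounded_wellorder TYPE('k)"
proof
  fix x :: 'k
  show "\<exists>y. x < y"
  proof (rule ccontr)
    assume "\<not> (\<exists>y. x < y)"
    hence "(UNIV :: 'k set) = {y. y < x} \<union> {x}" by (auto simp: not_less order_le_less)
    moreover have "(card_of {x}, card_of (UNIV :: 'k set)) \<in> ordLess"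
      by (rule finite_ordLess_infinite[OF card_of_Well_order card_of_Well_order])
        (use inf in \<open>simp_all add: Field_card_of\<close>)
    ultimately have "(card_of (UNIV :: 'k set), card_of (UNIV :: 'k set)) \<in> ordLess"
      using card_of_Un_ordLess_infinite[OF inf] card by metis
    thus False using ordLess_irreflexive by blast
  qed
qed

theorem theorem2:
  fixes i :: player
  assumes inf: "infinite (UNIV :: 'k::wellorder set)"
    and card: "\<forall>x::'k. (card_of {y. y < x}, card_of (UNIV :: 'k set)) \<in> ordLess"
    and regular: "\<forall>K::'k set. (\<forall>x. \<exists>y\<in>K. x \<le> y) \<longrightarrow> (card_of K, card_of (UNIV :: 'k set)) \<in> ordIso"
  shows "\<exists>Ti :: 'k world \<Rightarrow> ('k world set \<Rightarrow> real).
    \<forall>w \<in> (Wk :: 'k world set).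
      fa_prob Wk (Ti w)
    \<and> (\<forall>u \<in> Pset i w. Ti u = Ti w)
    \<and> Ti w (Pset i w) = 1
    \<and> Ti w {u \<in> Wk. fst u = fst w} = (if wrec i w ozero then 1 else 1/2)
    \<and> (\<forall>b::'k. Ti w {u \<in> Wk. wrec (other i) u b = wrec (other i) w b}
                = (if wrec i w (osucc b) then 1 else 1/2))
    \<and> (\<forall>l::'k. is_limit l \<longrightarrow>
          Ti w {u \<in> Wk. lim_par l (wrec (other i) u) = lim_par l (wrec (other i) w)}
            = (if wrec i w l then 1 else 1/2))
    \<and> (\<forall>b a :: 'k. b < a \<longrightarrow> (\<forall>u \<in> Wk. \<forall>v \<in> Wk. \<forall>E. E \<subseteq> W_at b \<longrightarrow>
          restr a u = restr a v \<longrightarrow> Ti u (preim b E) = Ti v (preim b E)))"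
proof -
  interpret unbounded_wellorder "TYPE('k)"
    using unbounded_wellorder_if_initial_segments_smaller[OF inf card] .
  obtain Ti where "type_kernel_on i (UNIV :: 'k set) Ti"
    using ex_type_kernel_on_UNIV by blast
  thus ?thesis unfolding type_kernel_on_def by blast
qed

end
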